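(* A finite connected simple undirected graph $Y$ is bipartite if and only if $\kappa(Y)$ is odd.
   Context: A click at a vertex $x$ that is a source of an orientation reverses all edges incident to $x$, making $x$ a sink. Two acyclic orientations of $Y$ are $\kappa$-equivalent if one can be transformed into the other by a finite sequence of clicks; $\kappa(Y)$ is the number of $\kappa$-equivalence classes of acyclic orientations of $Y$. *)

theory Defs
  imports Main
begin

definition simple_graph :: "'a set \<Rightarrow> ('a \<Rightarrow> 'a \<Rightarrow> bool) \<Rightarrow> bool" where
  "simple_graph V E \<longleftrightarrow> finite V \<and> (\<forall>u v. E u v \<longrightarrow> u \<in> V \<and> v \<in> V)
     \<and> (\<forall>u v. E u v \<longrightarrow> E v u) \<and> (\<forall>u. \<not> E u u)"

definition connected_graph :: "'a set \<Rightarrow> ('a \<Rightarrow> 'a \<Rightarrow> bool) \<Rightarrow> bool" where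
  "connected_graph V E \<longleftrightarrow> (\<forall>u\<in>V. \<forall>v\<in>V. (u, v) \<in> {(x, y). E x y}\<^sup>*)"

definition bipartite :: "'a set \<Rightarrow> ('a \<Rightarrow> 'a \<Rightarrow> bool) \<Rightarrow> bool" where
  "bipartite V E \<longleftrightarrow> (\<exists>A \<subseteq> V. \<forall>u v. E u v \<longrightarrow> (u \<in> A \<longleftrightarrow> v \<notin> A))"

definition orientation :: "('a \<Rightarrow> 'a \<Rightarrow> bool) \<Rightarrow> ('a \<Rightarrow> 'a \<Rightarrow> bool) \<Rightarrow> bool" where
  "orientation E D \<longleftrightarrow> (\<forall>u v. D u v \<longrightarrow> E u v) \<and> (\<forall>u v. E u v \<longrightarrow> (D u v \<longleftrightarrow> \<not> D v u))"

definition acyclic_orientation :: "('a \<Rightarrow> 'a \<Rightarrow> bool) \<Rightarrow> ('a \<Rightarrow> 'a \<Rightarrow> bool) \<Rightarrow> bool" where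
  "acyclic_orientation E D \<longleftrightarrow> orientation E D \<and> acyclic {(u, v). D u v}"

definition acyc_orients :: "('a \<Rightarrow> 'a \<Rightarrow> bool) \<Rightarrow> ('a \<Rightarrow> 'a \<Rightarrow> bool) set" where
  "acyc_orients E = {D. acyclic_orientation E D}"

definition is_source :: "'a set \<Rightarrow> ('a \<Rightarrow> 'a \<Rightarrow> bool) \<Rightarrow> 'a \<Rightarrow> bool" where
  "is_source V D x \<longleftrightarrow> x \<in> V \<and> (\<forall>y. \<not> D y x)"

definition click :: "'a \<Rightarrow> ('a \<Rightarrow> 'a \<Rightarrow> bool) \<Rightarrow> ('a \<Rightarrow> 'a \<Rightarrow> bool)" where
  "click x D = (\<lambda>u v. if u = x \<or> v = x then D v u else D u v)"

definition click_step :: "'a set \<Rightarrow> ('a \<Rightarrow> 'a \<Rightarrow> bool)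
    \<Rightarrow> (('a \<Rightarrow> 'a \<Rightarrow> bool) \<times> ('a \<Rightarrow> 'a \<Rightarrow> bool)) set" where
  "click_step V E = {(D, D'). D \<in> acyc_orients E \<and> (\<exists>x. is_source V D x \<and> D' = click x D)}"

definition kappa_equiv :: "'a set \<Rightarrow> ('a \<Rightarrow> 'a \<Rightarrow> bool)
    \<Rightarrow> (('a \<Rightarrow> 'a \<Rightarrow> bool) \<times> ('a \<Rightarrow> 'a \<Rightarrow> bool)) set" where
  "kappa_equiv V E = (click_step V E \<union> (click_step V E)\<inverse>)\<^sup>*"

definition kappa :: "'a set \<Rightarrow> ('a \<Rightarrow> 'a \<Rightarrow> bool) \<Rightarrow> nat" where
  "kappa V E = card (acyc_orients E // kappa_equiv V E)"

end

theory Submission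
  imports Defs
begin

text \<open>Record an orientation D by its sign vector on the edges, +1 along D and -1 against it.
A click at a source x subtracts twice the coboundary of the indicator of x; conversely two
acyclic orientations whose sign vectors differ by -2 \<delta>p are joined by clicks, since clicking
at a D-minimal maximiser of p lowers p there by one. So the \<kappa>-classes are the classes of
sign vectors modulo 2 \<delta>p. Reversal negates sign vectors and hence acts as an involution on
the classes, and a class is fixed iff its sign vectors are themselves coboundaries \<delta>p.
The parity of p then 2-colours the graph, and conversely a bipartition yields such an
orientation; moreover any two coboundary sign vectors differ by an even coboundary, so there is
at most one fixed class. An involution of a finite set has as many fixed points as the set has
elements, modulo 2, so \<kappa> is odd exactly for bipartite graphs.\<close>

lemma simple_graphD:
  assumes "simple_graph V E"
  shows "finite V" "E u v \<Longrightarrow> u \<in> V \<and> v \<in> V" "symp E"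
  using assms by (auto simp: simple_graph_def intro: sympI)

lemma acyc_orientsD:
  assumes "D \<in> acyc_orients E"
  shows "orientation E D" "D u v \<Longrightarrow> E u v" "E u v \<Longrightarrow> D u v \<longleftrightarrow> \<not> D v u"
    "acyclic {(u, v). D u v}"
  using assms by (auto simp: acyc_orients_def acyclic_orientation_def orientation_def)

lemma finite_acyc_orients:
  assumes "simple_graph V E"
  shows "finite (acyc_orients E)"
proof -
  have "acyc_orients E \<subseteq> (\<lambda>R u v. (u, v) \<in> R) ` Pow (V \<times> V)"
  proof
    fix D assume D: "D \<in> acyc_orients E"
    have "{(u, v). D u v} \<in> Pow (V \<times> V)"
      using acyc_orientsD(2)[OF D] simple_graphD(2)[OF assms] by blast
    then show "D \<in> (\<lambda>R u v. (u, v) \<in> R) ` Pow (V \<times> V)" by (rule rev_image_eqI) simp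
  qed
  moreover have "finite (Pow (V \<times> V))" using simple_graphD(1)[OF assms] by simp
  ultimately show ?thesis by (rule finite_subset[OF _ finite_imageI])
qed

definition edge_sign :: "('a \<Rightarrow> 'a \<Rightarrow> bool) \<Rightarrow> 'a \<Rightarrow> 'a \<Rightarrow> int" where
  "edge_sign D u v = (if D u v then 1 else -1)"

lemma edge_sign_cases: "edge_sign D u v = 1 \<or> edge_sign D u v = -1"
  by (simp add: edge_sign_def)

definition potential_equiv :: "('a \<Rightarrow> 'a \<Rightarrow> bool) \<Rightarrow> ('a \<Rightarrow> 'a \<Rightarrow> bool) \<Rightarrow> ('a \<Rightarrow> 'a \<Rightarrow> bool) \<Rightarrow> bool"
  where "potential_equiv E D D' \<longleftrightarrow>
    (\<exists>p::'a \<Rightarrow> int. \<forall>u v. E u v \<longrightarrow> edge_sign D' u v = edge_sign D u v - 2 * (p u - p v))"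

lemma potential_equiv_refl: "potential_equiv E D D"
  unfolding potential_equiv_def by (rule exI[of _ "\<lambda>_. 0"]) simp

lemma potential_equiv_sym:
  assumes "potential_equiv E D D'"
  shows "potential_equiv E D' D"
proof -
  obtain p where "\<forall>u v. E u v \<longrightarrow> edge_sign D' u v = edge_sign D u v - 2 * (p u - p v)"
    using assms unfolding potential_equiv_def by blast
  then show ?thesis unfolding potential_equiv_def by (intro exI[of _ "\<lambda>x. - p x"]) auto
qed

lemma potential_equiv_trans:
  assumes "potential_equiv E D D'" "potential_equiv E D' D''"
  shows "potential_equiv E D D''"
proof -
  obtain p q where
    p: "\<forall>u v. E u v \<longrightarrow> edge_sign D' u v = edge_sign D u v - 2 * (p u - p v)" and
    q: "\<forall>u v. E u v \<longrightarrow> edge_sign D'' u v = edge_sign D' u v - 2 * (q u - q v)"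
    using assms unfolding potential_equiv_def by blast
  have "edge_sign D'' u v = edge_sign D u v - 2 * ((p u + q u) - (p v + q v))" if "E u v" for u v
    using p[rule_format, OF that] q[rule_format, OF that] by (simp add: algebra_simps)
  then show ?thesis unfolding potential_equiv_def by (intro exI[of _ "\<lambda>x. p x + q x"]) blast
qed

lemma orientation_eqI:
  assumes "orientation E D" "orientation E D'"
    and "\<And>u v. E u v \<Longrightarrow> edge_sign D u v = edge_sign D' u v"
  shows "D = D'"
proof (intro ext)
  fix u v show "D u v = D' u v"
  proof (cases "E u v")
    case True
    then have "edge_sign D u v = edge_sign D' u v" by (rule assms(3))
    then show ?thesis by (simp add: edge_sign_def split: if_splits)
  next
    case False
    then show ?thesis using assms(1,2) unfolding orientation_def by blast
  qed
qed

subsection \<open>Clicks\<close>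

lemma click_in_acyc_orients:
  assumes E: "symp E" and D: "D \<in> acyc_orients E" and source: "\<And>y. \<not> D y x"
  shows "click x D \<in> acyc_orients E"
proof -
  have "orientation E (click x D)"
    unfolding orientation_def click_def
  proof (intro conjI allI impI)
    fix u v assume "if u = x \<or> v = x then D v u else D u v"
    then show "E u v" using acyc_orientsD(2)[OF D] sympD[OF E] by (auto split: if_splits)
  next
    fix u v assume "E u v"
    then have "D u v \<longleftrightarrow> \<not> D v u" by (rule acyc_orientsD(3)[OF D])
    then show "(if u = x \<or> v = x then D v u else D u v)
        \<longleftrightarrow> \<not> (if v = x \<or> u = x then D u v else D v u)" by auto
  qed
  moreover
  let ?r = "{(u, v). D u v}" and ?c = "{(u, v). click x D u v}"
  \<comment> \<open>x becomes a sink, so it can only end a path of the clicked orientation, whose other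
    steps are steps of D\<close>
  have path: "a \<noteq> x \<and> (b = x \<or> (a, b) \<in> ?r\<^sup>+)" if "(a, b) \<in> ?c\<^sup>+" for a b
    using that
  proof (induction rule: trancl_induct)
    case (base b)
    then show ?case using source by (auto simp: click_def split: if_splits)
  next
    case (step b c)
    have "b \<noteq> x" using step(2) source[of c] by (auto simp: click_def)
    then have "(a, b) \<in> ?r\<^sup>+" using step(3) by auto
    moreover have "(b, c) \<in> ?r" if "c \<noteq> x"
      using that \<open>b \<noteq> x\<close> step(2) by (simp add: click_def)
    ultimately show ?case using step(3) trancl_into_trancl[of a b ?r c] by blast
  qed
  have "acyclic ?c"
    unfolding acyclic_def
  proof (intro allI notI)
    fix u assume "(u, u) \<in> ?c\<^sup>+"
    then have "(u, u) \<in> ?r\<^sup>+" using path by blast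
    then show False using acyc_orientsD(4)[OF D] by (simp add: acyclic_def)
  qed
  ultimately show ?thesis by (simp add: acyc_orients_def acyclic_orientation_def)
qed

lemma edge_sign_click:
  assumes "orientation E D" "\<And>y. \<not> D y x" "E u v"
  shows "edge_sign (click x D) u v = edge_sign D u v - 2 * (of_bool (u = x) - of_bool (v = x))"
  using assms unfolding orientation_def edge_sign_def click_def by (cases "u = x") fastforce+

lemma potential_equiv_click:
  assumes "orientation E D" "\<And>y. \<not> D y x"
  shows "potential_equiv E D (click x D)"
  unfolding potential_equiv_def
  by (rule exI[of _ "\<lambda>y. of_bool (y = x)"]) (simp add: edge_sign_click[OF assms])

lemma kappa_equiv_imp_potential_equiv:
  assumes E: "simple_graph V E" and "(D, D') \<in> kappa_equiv V E" and D: "D \<in> acyc_orients E"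
  shows "D' \<in> acyc_orients E \<and> potential_equiv E D D'"
  using assms(2) unfolding kappa_equiv_def
proof (induction rule: rtrancl_induct)
  case base
  then show ?case using D by (simp add: potential_equiv_refl)
next
  case (step D1 D2)
  then have D1: "D1 \<in> acyc_orients E" "potential_equiv E D D1" by auto
  from step.hyps(2) show ?case
  proof
    assume "(D1, D2) \<in> click_step V E"
    then obtain x where "\<And>y. \<not> D1 y x" "D2 = click x D1"
      by (auto simp: click_step_def is_source_def)
    then have "D2 \<in> acyc_orients E" "potential_equiv E D1 D2"
      using click_in_acyc_orients[OF simple_graphD(3)[OF E] D1(1)]
        potential_equiv_click[OF acyc_orientsD(1)[OF D1(1)]] by auto
    then show ?thesis using D1(2) potential_equiv_trans by blast
  next
    assume "(D1, D2) \<in> (click_step V E)\<inverse>"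
    then obtain x where D2: "D2 \<in> acyc_orients E" and "\<And>y. \<not> D2 y x" "D1 = click x D2"
      by (auto simp: click_step_def is_source_def)
    then have "potential_equiv E D2 D1"
      using potential_equiv_click[OF acyc_orientsD(1)[OF D2]] by auto
    then show ?thesis using D1(2) D2 potential_equiv_sym potential_equiv_trans by blast
  qed
qed

subsection \<open>Descent along a potential\<close>

lemma potential_le_along_edge:
  assumes "\<forall>u v. E u v \<longrightarrow> edge_sign D' u v = edge_sign D u v - 2 * (p u - p v)"
    and "E y x" "D y x"
  shows "p x \<le> p y"
proof -
  have "edge_sign D' y x = 1 - 2 * (p y - p x)"
    using assms by (simp add: edge_sign_def)
  then show ?thesis using edge_sign_cases[of D' y x] by auto
qed

lemma source_maximising_potential:
  assumes E: "simple_graph V E" and "V \<noteq> {}" and D: "D \<in> acyc_orients E"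
    and p: "\<forall>u v. E u v \<longrightarrow> edge_sign D' u v = edge_sign D u v - 2 * (p u - p v)"
  obtains x where "is_source V D x" "\<And>y. y \<in> V \<Longrightarrow> p y \<le> p x"
proof -
  note inV = simple_graphD(2)[OF E]
  define S where "S = {v \<in> V. p v = Max (p ` V)}"
  have "Max (p ` V) \<in> p ` V" using simple_graphD(1)[OF E] \<open>V \<noteq> {}\<close> by (intro Max_in) auto
  then obtain x0 where "x0 \<in> S" unfolding S_def by auto
  moreover have "{(u, v). D u v} \<subseteq> V \<times> V"
    using acyc_orientsD(2)[OF D] inV by blast
  then have "finite {(u, v). D u v}"
    using simple_graphD(1)[OF E] by (simp add: finite_subset)
  then have "wf {(u, v). D u v}"
    using acyc_orientsD(4)[OF D] by (rule finite_acyclic_wf)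
  ultimately obtain x where x: "x \<in> S"
    and minimal: "\<And>y. (y, x) \<in> {(u, v). D u v} \<Longrightarrow> y \<notin> S"
    using wfE_min by metis
  have max: "p y \<le> p x" if "y \<in> V" for y
    using x that simple_graphD(1)[OF E] unfolding S_def by auto
  \<comment> \<open>an edge into x would come from a vertex of potential at least p x, i.e. from S\<close>
  have "\<not> D y x" for y
  proof
    assume "D y x"
    then have "E y x" by (rule acyc_orientsD(2)[OF D])
    then have "p x \<le> p y" "y \<in> V"
      using potential_le_along_edge[OF p] \<open>D y x\<close> inV by auto
    then have "y \<in> S" using max[of y] x unfolding S_def by auto
    then show False using minimal \<open>D y x\<close> by simp
  qed
  then have "is_source V D x" using x by (simp add: S_def is_source_def)
  then show ?thesis using that max by blast
qed

lemma kappa_equiv_of_nonneg_potential: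
  assumes E: "simple_graph V E" and D: "D \<in> acyc_orients E" and D': "D' \<in> acyc_orients E"
    and p: "\<forall>u v. E u v \<longrightarrow> edge_sign D' u v = edge_sign D u v - 2 * (p u - p v)"
    and nonneg: "\<forall>v\<in>V. 0 \<le> p v"
  shows "(D, D') \<in> kappa_equiv V E"
  using D p nonneg
proof (induction "nat (\<Sum>v\<in>V. p v)" arbitrary: D p rule: less_induct)
  case less
  show ?case
  proof (cases "\<exists>v\<in>V. 0 < p v")
    case False
    have "edge_sign D u v = edge_sign D' u v" if "E u v" for u v
    proof -
      have "p u = 0" "p v = 0"
        using False less.prems(3) simple_graphD(2)[OF E that] by force+
      then show ?thesis using less.prems(2) that by simp
    qed
    then have "D = D'"
      by (rule orientation_eqI[OF acyc_orientsD(1)[OF less.prems(1)] acyc_orientsD(1)[OF D']])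
    then show ?thesis by (simp add: kappa_equiv_def)
  next
    case True
    then obtain v where v: "v \<in> V" "0 < p v" by blast
    then obtain x where source: "is_source V D x" and "\<And>y. y \<in> V \<Longrightarrow> p y \<le> p x"
      using source_maximising_potential[OF E _ less.prems(1,2)] by blast
    then have x: "x \<in> V" "0 < p x" "\<And>y. \<not> D y x"
      using v by (force simp: is_source_def)+
    define p1 where "p1 v = p v - of_bool (v = x)" for v
    have "\<forall>u v. E u v \<longrightarrow> edge_sign D' u v = edge_sign (click x D) u v - 2 * (p1 u - p1 v)"
      using less.prems(2) edge_sign_click[OF acyc_orientsD(1)[OF less.prems(1)] x(3)]
      by (simp add: p1_def algebra_simps)
    moreover have "(\<Sum>v\<in>V. p1 v) = (\<Sum>v\<in>V. p v) - 1"
      using simple_graphD(1)[OF E] x(1) by (simp add: p1_def sum_subtractf of_bool_def)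
    moreover have "0 < (\<Sum>v\<in>V. p v)"
      using less.prems(3) by (intro sum_pos2[where f = p, OF simple_graphD(1)[OF E] x(1,2)]) auto
    moreover have "\<forall>v\<in>V. 0 \<le> p1 v" using less.prems(3) x(2) by (simp add: p1_def)
    moreover have "click x D \<in> acyc_orients E"
      using click_in_acyc_orients[OF simple_graphD(3)[OF E] less.prems(1) x(3)] .
    ultimately have "(click x D, D') \<in> kappa_equiv V E"
      using less.hyps[of p1 "click x D"] by simp
    moreover have "(D, click x D) \<in> kappa_equiv V E"
      unfolding kappa_equiv_def click_step_def using less.prems(1) source by blast
    ultimately show ?thesis
      unfolding kappa_equiv_def by (rule rtrancl_trans[rotated])
  qed
qed

lemma kappa_equiv_iff_potential_equiv:
  assumes E: "simple_graph V E" and D: "D \<in> acyc_orients E"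
  shows "(D, D') \<in> kappa_equiv V E \<longleftrightarrow> D' \<in> acyc_orients E \<and> potential_equiv E D D'"
proof
  assume "D' \<in> acyc_orients E \<and> potential_equiv E D D'"
  then obtain p where D': "D' \<in> acyc_orients E"
    and p: "\<forall>u v. E u v \<longrightarrow> edge_sign D' u v = edge_sign D u v - 2 * (p u - p v)"
    unfolding potential_equiv_def by blast
  \<comment> \<open>shifting p by a constant keeps the relation and makes it nonnegative on V\<close>
  define m where "m = Min (insert 0 (p ` V))"
  have "\<forall>u v. E u v \<longrightarrow> edge_sign D' u v = edge_sign D u v - 2 * ((p u - m) - (p v - m))"
    using p by simp
  moreover have "\<forall>v\<in>V. 0 \<le> p v - m"
    unfolding m_def using simple_graphD(1)[OF E] by auto
  ultimately show "(D, D') \<in> kappa_equiv V E"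
    by (rule kappa_equiv_of_nonneg_potential[OF E D D'])
qed (use kappa_equiv_imp_potential_equiv[OF E _ D] in blast)

lemma kappa_class_eq:
  assumes "simple_graph V E" "D \<in> acyc_orients E"
  shows "kappa_equiv V E `` {D} = {D' \<in> acyc_orients E. potential_equiv E D D'}"
  using kappa_equiv_iff_potential_equiv[OF assms] by blast

lemma kappa_class_eq_iff:
  assumes "simple_graph V E" "D \<in> acyc_orients E" "D' \<in> acyc_orients E"
  shows "kappa_equiv V E `` {D} = kappa_equiv V E `` {D'} \<longleftrightarrow> potential_equiv E D D'"
  using kappa_class_eq[OF assms(1,2)] kappa_class_eq[OF assms(1,3)] assms(3)
    potential_equiv_refl[of E D'] potential_equiv_sym[of E] potential_equiv_trans[of E]
  by blast

subsection \<open>Reversal\<close>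

definition reverse_orientation :: "('a \<Rightarrow> 'a \<Rightarrow> bool) \<Rightarrow> 'a \<Rightarrow> 'a \<Rightarrow> bool" where
  "reverse_orientation D = (\<lambda>u v. D v u)"

lemma reverse_reverse_orientation [simp]: "reverse_orientation (reverse_orientation D) = D"
  by (simp add: reverse_orientation_def)

lemma reverse_orientation_in_acyc_orients:
  assumes "symp E" "D \<in> acyc_orients E"
  shows "reverse_orientation D \<in> acyc_orients E"
proof -
  have "orientation E (reverse_orientation D)"
    using acyc_orientsD(1)[OF assms(2)] sympD[OF assms(1)]
    unfolding orientation_def reverse_orientation_def by blast
  moreover have "{(u, v). reverse_orientation D u v} = {(u, v). D u v}\<inverse>"
    by (auto simp: reverse_orientation_def)
  ultimately show ?thesis
    using acyc_orientsD(4)[OF assms(2)] by (simp add: acyc_orients_def acyclic_orientation_def)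
qed

lemma potential_equiv_reverse:
  assumes "symp E" "potential_equiv E D D'"
  shows "potential_equiv E (reverse_orientation D) (reverse_orientation D')"
proof -
  obtain p where p: "\<forall>u v. E u v \<longrightarrow> edge_sign D' u v = edge_sign D u v - 2 * (p u - p v)"
    using assms(2) unfolding potential_equiv_def by blast
  have "\<forall>u v. E u v \<longrightarrow> edge_sign (reverse_orientation D') u v
      = edge_sign (reverse_orientation D) u v - 2 * (- p u - - p v)"
    using p sympD[OF assms(1)] by (auto simp: edge_sign_def reverse_orientation_def)
  then show ?thesis unfolding potential_equiv_def by (intro exI[of _ "\<lambda>v. - p v"])
qed

lemma reverse_image_kappa_class:
  assumes E: "simple_graph V E" and D: "D \<in> acyc_orients E"
  shows "reverse_orientation ` (kappa_equiv V E `` {D}) = kappa_equiv V E `` {reverse_orientation D}"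
proof -
  note rev_acyc = reverse_orientation_in_acyc_orients[OF simple_graphD(3)[OF E]]
  note rev_equiv = potential_equiv_reverse[OF simple_graphD(3)[OF E]]
  have "D' \<in> reverse_orientation ` {D' \<in> acyc_orients E. potential_equiv E D D'}"
    if "D' \<in> acyc_orients E" "potential_equiv E (reverse_orientation D) D'" for D'
    using that rev_acyc rev_equiv[of "reverse_orientation D" D']
    by (metis (mono_tags, lifting) image_eqI mem_Collect_eq reverse_reverse_orientation)
  then show ?thesis
    unfolding kappa_class_eq[OF E D] kappa_class_eq[OF E rev_acyc[OF D]]
    using rev_acyc rev_equiv by auto
qed

lemma reverse_fixes_kappa_class_iff:
  assumes E: "simple_graph V E" and D: "D \<in> acyc_orients E"
  shows "reverse_orientation ` (kappa_equiv V E `` {D}) = kappa_equiv V E `` {D}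
    \<longleftrightarrow> potential_equiv E D (reverse_orientation D)"
  unfolding reverse_image_kappa_class[OF E D]
  using kappa_class_eq_iff[OF E reverse_orientation_in_acyc_orients[OF simple_graphD(3)[OF E] D] D]
    potential_equiv_sym by blast

subsection \<open>Self-reverse classes and bipartitions\<close>

definition gradient_orientation :: "('a \<Rightarrow> 'a \<Rightarrow> bool) \<Rightarrow> ('a \<Rightarrow> 'a \<Rightarrow> bool) \<Rightarrow> bool" where
  "gradient_orientation E D \<longleftrightarrow> (\<exists>p::'a \<Rightarrow> int. \<forall>u v. E u v \<longrightarrow> edge_sign D u v = p u - p v)"

lemma potential_equiv_reverse_iff_gradient_orientation:
  assumes "orientation E D"
  shows "potential_equiv E D (reverse_orientation D) \<longleftrightarrow> gradient_orientation E D"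
proof -
  have "edge_sign (reverse_orientation D) u v = - edge_sign D u v" if "E u v" for u v
    using assms that by (auto simp: orientation_def edge_sign_def reverse_orientation_def)
  then have "edge_sign (reverse_orientation D) u v = edge_sign D u v - 2 * (p u - p v)
      \<longleftrightarrow> edge_sign D u v = p u - p v" if "E u v" for u v p
    using that by auto
  then show ?thesis unfolding potential_equiv_def gradient_orientation_def by blast
qed

lemma bipartite_if_gradient_orientation:
  assumes "\<And>u v. E u v \<Longrightarrow> u \<in> V \<and> v \<in> V" and "gradient_orientation E D"
  shows "bipartite V E"
proof -
  obtain p where p: "\<forall>u v. E u v \<longrightarrow> edge_sign D u v = p u - p v"
    using assms(2) unfolding gradient_orientation_def by blast
  show ?thesis
    unfolding bipartite_def
  proof (intro exI[of _ "{v \<in> V. even (p v)}"] conjI allI impI)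
    fix u v assume "E u v"
    then have "p u - p v = 1 \<or> p u - p v = -1"
      using p edge_sign_cases[of D u v] by simp
    then have "even (p u) \<longleftrightarrow> odd (p v)" by presburger
    then show "u \<in> {v \<in> V. even (p v)} \<longleftrightarrow> v \<notin> {v \<in> V. even (p v)}"
      using assms(1) \<open>E u v\<close> by auto
  qed auto
qed

text \<open>The two potentials differ by an even amount along every edge, so half their difference
is again a potential.\<close>
lemma potential_equiv_if_gradient_orientations:
  assumes "gradient_orientation E D" "gradient_orientation E D'"
  shows "potential_equiv E D D'"
proof -
  obtain p q where p: "\<forall>u v. E u v \<longrightarrow> edge_sign D u v = p u - p v"
    and q: "\<forall>u v. E u v \<longrightarrow> edge_sign D' u v = q u - q v"
    using assms unfolding gradient_orientation_def by blast
  show ?thesis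
    unfolding potential_equiv_def
  proof (intro exI[of _ "\<lambda>x. (p x - q x) div 2"] allI impI)
    fix u v assume "E u v"
    then have D: "edge_sign D u v = p u - p v" and D': "edge_sign D' u v = q u - q v"
      using p q by blast+
    then have "p u - p v = 1 \<or> p u - p v = -1" "q u - q v = 1 \<or> q u - q v = -1"
      using edge_sign_cases[of D u v] edge_sign_cases[of D' u v] by simp_all
    then have "2 * ((p u - q u) div 2 - (p v - q v) div 2) = (p u - q u) - (p v - q v)"
      by presburger
    then show "edge_sign D' u v = edge_sign D u v - 2 * ((p u - q u) div 2 - (p v - q v) div 2)"
      unfolding D D' by simp
  qed
qed

definition bipartition_orientation :: "'a set \<Rightarrow> ('a \<Rightarrow> 'a \<Rightarrow> bool) \<Rightarrow> 'a \<Rightarrow> 'a \<Rightarrow> bool" where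
  "bipartition_orientation A E = (\<lambda>u v. E u v \<and> u \<in> A)"

lemma bipartition_orientation_in_acyc_orients:
  assumes E: "symp E" and A: "\<forall>u v. E u v \<longrightarrow> (u \<in> A \<longleftrightarrow> v \<notin> A)"
  shows "bipartition_orientation A E \<in> acyc_orients E"
proof -
  let ?r = "{(u, v). bipartition_orientation A E u v}"
  have "orientation E (bipartition_orientation A E)"
    unfolding orientation_def bipartition_orientation_def
  proof (intro conjI allI impI)
    fix u v assume "E u v"
    then have "E v u" "u \<in> A \<longleftrightarrow> v \<notin> A" using A sympD[OF E] by blast+
    then show "(E u v \<and> u \<in> A) \<longleftrightarrow> \<not> (E v u \<and> v \<in> A)" using \<open>E u v\<close> by blast
  qed simp
  have out: "v \<notin> A" if "(u, v) \<in> ?r" for u v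
    using that A[rule_format, of u v] by (simp add: bipartition_orientation_def)
  have src: "u \<in> A" if "(u, v) \<in> ?r" for u v
    using that by (simp add: bipartition_orientation_def)
  \<comment> \<open>every edge runs from A to its complement, so no path has two steps\<close>
  have "trans ?r"
    by (rule transI) (use out src in blast)
  then have "?r\<^sup>+ = ?r" by (rule trancl_id)
  then have "acyclic ?r"
    unfolding acyclic_def using out src by blast
  with \<open>orientation E (bipartition_orientation A E)\<close> show ?thesis
    by (simp add: acyc_orients_def acyclic_orientation_def)
qed

lemma gradient_bipartition_orientation:
  assumes A: "\<forall>u v. E u v \<longrightarrow> (u \<in> A \<longleftrightarrow> v \<notin> A)"
  shows "gradient_orientation E (bipartition_orientation A E)"
  unfolding gradient_orientation_def
proof (intro exI[of _ "\<lambda>u. of_bool (u \<in> A)"] allI impI)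
  fix u v assume "E u v"
  moreover have "u \<in> A \<longleftrightarrow> v \<notin> A" using A \<open>E u v\<close> by blast
  ultimately show "edge_sign (bipartition_orientation A E) u v = of_bool (u \<in> A) - of_bool (v \<in> A)"
    by (cases "u \<in> A") (simp_all add: edge_sign_def bipartition_orientation_def)
qed

lemma bipartite_iff_gradient_acyc_orient:
  assumes E: "simple_graph V E"
  shows "bipartite V E \<longleftrightarrow> (\<exists>D \<in> acyc_orients E. gradient_orientation E D)"
proof
  assume "bipartite V E"
  then obtain A where "\<forall>u v. E u v \<longrightarrow> (u \<in> A \<longleftrightarrow> v \<notin> A)"
    unfolding bipartite_def by blast
  then show "\<exists>D \<in> acyc_orients E. gradient_orientation E D"
    using bipartition_orientation_in_acyc_orients[OF simple_graphD(3)[OF E]]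
      gradient_bipartition_orientation by blast
qed (use bipartite_if_gradient_orientation[OF simple_graphD(2)[OF E]] in blast)

lemma reverse_fixed_kappa_classes:
  assumes E: "simple_graph V E"
  shows "{X \<in> acyc_orients E // kappa_equiv V E. reverse_orientation ` X = X}
    = (\<lambda>D. kappa_equiv V E `` {D}) ` {D \<in> acyc_orients E. gradient_orientation E D}"
proof -
  have "reverse_orientation ` (kappa_equiv V E `` {D}) = kappa_equiv V E `` {D}
      \<longleftrightarrow> gradient_orientation E D" if "D \<in> acyc_orients E" for D
    using reverse_fixes_kappa_class_iff[OF E that]
      potential_equiv_reverse_iff_gradient_orientation[OF acyc_orientsD(1)[OF that]] by simp
  then show ?thesis by (auto simp: quotientI elim!: quotientE)
qed

lemma card_reverse_fixed_kappa_classes: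
  assumes E: "simple_graph V E"
  shows "card {X \<in> acyc_orients E // kappa_equiv V E. reverse_orientation ` X = X}
    = (if bipartite V E then 1 else 0)"
proof (cases "bipartite V E")
  case True
  then obtain D0 where D0: "D0 \<in> acyc_orients E" "gradient_orientation E D0"
    using bipartite_iff_gradient_acyc_orient[OF E] by blast
  have "kappa_equiv V E `` {D} = kappa_equiv V E `` {D0}"
    if "D \<in> acyc_orients E" "gradient_orientation E D" for D
    using kappa_class_eq_iff[OF E that(1) D0(1)]
      potential_equiv_if_gradient_orientations[OF that(2) D0(2)] by simp
  then have "(\<lambda>D. kappa_equiv V E `` {D}) ` {D \<in> acyc_orients E. gradient_orientation E D}
      = {kappa_equiv V E `` {D0}}"
    using D0 by blast
  then show ?thesis using True unfolding reverse_fixed_kappa_classes[OF E] by simp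
next
  case False
  then have none: "{D \<in> acyc_orients E. gradient_orientation E D} = {}"
    using bipartite_iff_gradient_acyc_orient[OF E] by blast
  show ?thesis using False unfolding reverse_fixed_kappa_classes[OF E] none by simp
qed

lemma involution_card_parity:
  assumes "finite Q" "\<And>x. x \<in> Q \<Longrightarrow> f x \<in> Q" "\<And>x. x \<in> Q \<Longrightarrow> f (f x) = x"
  shows "even (card Q) \<longleftrightarrow> even (card {x \<in> Q. f x = x})"
  using assms
proof (induction "card Q" arbitrary: Q rule: less_induct)
  case less
  show ?case
  proof (cases "\<forall>x\<in>Q. f x = x")
    case True
    then have "{x \<in> Q. f x = x} = Q" by auto
    then show ?thesis by simp
  next
    case False
    then obtain x where x: "x \<in> Q" "f x \<noteq> x" by auto
    let ?Q' = "Q - {x, f x}"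
    have pair: "{x, f x} \<subseteq> Q" "card {x, f x} = 2" using less.prems x by auto
    then have card_Q: "card Q = card ?Q' + 2"
      using card_Diff_subset[OF _ pair(1)] card_mono[OF less.prems(1) pair(1)] less.prems(1)
      by (simp add: finite_subset)
    have maps: "f y \<in> ?Q'" if "y \<in> ?Q'" for y
    proof -
      have "y \<in> Q" using that by blast
      then have "f y \<in> Q" "f (f y) = y" using less.prems(2,3) by blast+
      moreover have "f (f x) = x" using less.prems(3) x(1) by blast
      ultimately show ?thesis using that by auto
    qed
    have "even (card ?Q') \<longleftrightarrow> even (card {y \<in> ?Q'. f y = y})"
      using less.hyps[of ?Q'] maps less.prems(1,3) card_Q by simp
    moreover have "{y \<in> ?Q'. f y = y} = {y \<in> Q. f y = y}"
      using x less.prems(3)[OF x(1)] by auto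
    ultimately show ?thesis using card_Q by simp
  qed
qed

lemma finite_kappa_classes:
  assumes "simple_graph V E"
  shows "finite (acyc_orients E // kappa_equiv V E)"
  unfolding quotient_def using finite_acyc_orients[OF assms] by simp

lemma reverse_image_in_kappa_classes:
  assumes E: "simple_graph V E" and X: "X \<in> acyc_orients E // kappa_equiv V E"
  shows "reverse_orientation ` X \<in> acyc_orients E // kappa_equiv V E"
proof -
  obtain D where D: "D \<in> acyc_orients E" and "X = kappa_equiv V E `` {D}"
    using X by (rule quotientE)
  then have "reverse_orientation ` X = kappa_equiv V E `` {reverse_orientation D}"
    using reverse_image_kappa_class[OF E D] by simp
  then show ?thesis
    using quotientI reverse_orientation_in_acyc_orients[OF simple_graphD(3)[OF E] D] by metis
qed

theorem corollary1:
  fixes V :: "'a set" and E :: "'a \<Rightarrow> 'a \<Rightarrow> bool"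
  assumes "simple_graph V E" and "connected_graph V E"
  shows "bipartite V E \<longleftrightarrow> odd (kappa V E)"
proof -
  let ?Q = "acyc_orients E // kappa_equiv V E"
  have "even (card ?Q) \<longleftrightarrow> even (card {X \<in> ?Q. reverse_orientation ` X = X})"
  proof (rule involution_card_parity)
    show "finite ?Q" by (rule finite_kappa_classes[OF assms(1)])
    show "reverse_orientation ` X \<in> ?Q" if "X \<in> ?Q" for X
      using assms(1) that by (rule reverse_image_in_kappa_classes)
    show "reverse_orientation ` reverse_orientation ` X = X" for X
      by (simp add: image_image)
  qed
  then show ?thesis
    unfolding kappa_def card_reverse_fixed_kappa_classes[OF assms(1)] by simp
qed

end
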